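(* Let $(\mathcal G,p)$ be a CPS on the finite set $\Omega$ with $\mathcal G$ closed under unions and nonempty intersections and covering $\Omega$. Let $G\in\mathcal G$, let $\mu_1,\dots,\mu_K$ be the distinct $\mathcal G$-atoms contained in $G$, let $E$ be an event and $q\in[0,1]$. If $p_{\mu_j}(E)=q$ for all $j=1,\dots,K$, then $p_G(E)=q$.
   Context: A CPS is a pair $(\mathcal G,p)$ where $\mathcal G$ is a family of nonempty subsets of $\Omega$ and $p$ assigns to each $G\in\mathcal G$ a probability measure $p_G$ on $\Omega$ with $p_G(G)=1$ and $p_G(E)=p_G(F)p_F(E)$ whenever $E\subseteq F\subseteq G$, $F,G\in\mathcal G$. The $\mathcal G$-atoms are the sets $m(\omega)=\bigcap\{H\in\mathcal G:\omega\in H\}$ for $\omega\in\Omega$; each belongs to $\mathcal G$. *)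

theory Defs
  imports "HOL-Probability.Probability"
begin

definition CPS :: "'a set \<Rightarrow> 'a set set \<Rightarrow> ('a set \<Rightarrow> 'a measure) \<Rightarrow> bool" where
  "CPS Omega Gs p \<longleftrightarrow>
     (\<forall>G\<in>Gs. G \<noteq> {} \<and> G \<subseteq> Omega) \<and>
     (\<forall>G\<in>Gs. prob_space (p G) \<and> space (p G) = Omega \<and> sets (p G) = Pow Omega
              \<and> measure (p G) G = 1) \<and>
     (\<forall>E F G. F \<in> Gs \<longrightarrow> G \<in> Gs \<longrightarrow> E \<subseteq> F \<longrightarrow> F \<subseteq> G \<longrightarrow>
              measure (p G) E = measure (p G) F * measure (p F) E)"

definition atom :: "'a set set \<Rightarrow> 'a \<Rightarrow> 'a set" where
  "atom Gs \<omega> = \<Inter>{H \<in> Gs. \<omega> \<in> H}"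

end

theory Submission
  imports Defs
begin

text \<open>Induction on H \<in> Gs with H \<subseteq> G, ordered by strict inclusion. If H is not an atom,
take a maximal proper subset A \<in> Gs of H and a point y \<in> H - A; by maximality and closure
under unions, H = A \<union> B for the atom B of y. The chain rule and inclusion-exclusion then give
p_H(E) = q (p_H(A) + p_H(B) - p_H(A \<inter> B)) = q p_H(H) = q,
by the induction hypothesis for A, B and, if it is nonempty, A \<inter> B.\<close>

lemma CPS_memberD:
  assumes "CPS Omega Gs p" "H \<in> Gs"
  shows "prob_space (p H)" "space (p H) = Omega" "sets (p H) = Pow Omega"
    "measure (p H) H = 1" "H \<subseteq> Omega" "H \<noteq> {}"
proof -
  have "\<forall>G\<in>Gs. G \<noteq> {} \<and> G \<subseteq> Omega"
    using assms(1) unfolding CPS_def by (elim conjE)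
  moreover have "\<forall>G\<in>Gs. prob_space (p G) \<and> space (p G) = Omega
      \<and> sets (p G) = Pow Omega \<and> measure (p G) G = 1"
    using assms(1) unfolding CPS_def by (elim conjE)
  ultimately show "prob_space (p H)" "space (p H) = Omega" "sets (p H) = Pow Omega"
    "measure (p H) H = 1" "H \<subseteq> Omega" "H \<noteq> {}"
    using assms(2) by simp_all
qed

lemma CPS_chain_rule:
  assumes "CPS Omega Gs p" "F \<in> Gs" "H \<in> Gs" "E \<subseteq> F" "F \<subseteq> H"
  shows "measure (p H) E = measure (p H) F * measure (p F) E"
proof -
  have "\<forall>E F G. F \<in> Gs \<longrightarrow> G \<in> Gs \<longrightarrow> E \<subseteq> F \<longrightarrow> F \<subseteq> G \<longrightarrow>
      measure (p G) E = measure (p G) F * measure (p F) E"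
    using assms(1) unfolding CPS_def by (elim conjE)
  then show ?thesis
    using assms(2-5) by blast
qed

lemma CPS_measure_Int_self:
  assumes "CPS Omega Gs p" "F \<in> Gs" "E \<subseteq> Omega"
  shows "measure (p F) (E \<inter> F) = measure (p F) E"
proof -
  note F = CPS_memberD[OF assms(1,2)]
  interpret prob_space "p F"
    by (fact F(1))
  have "prob (Omega - F) = 0"
    using prob_compl[of F] F by simp
  then have "Omega - F \<in> null_sets (p F)"
    using F by (auto simp: emeasure_eq_measure)
  moreover have "E \<inter> F = E - (Omega - F)"
    using assms(3) by blast
  ultimately show ?thesis
    using assms(3) F by (simp add: measure_Diff_null_set)
qed

lemma CPS_measure_Int_subset:
  assumes "CPS Omega Gs p" "F \<in> Gs" "H \<in> Gs" "F \<subseteq> H" "E \<subseteq> Omega"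
  shows "measure (p H) (E \<inter> F) = measure (p H) F * measure (p F) E"
  using CPS_chain_rule[OF assms(1-3) _ assms(4), of "E \<inter> F"]
    CPS_measure_Int_self[OF assms(1,2,5)]
  by simp

lemma CPS_measure_Un_eq:
  assumes cps: "CPS Omega Gs p" and "E \<subseteq> Omega"
    and "A \<in> Gs" "B \<in> Gs" "A \<union> B \<in> Gs"
    and "measure (p A) E = q" "measure (p B) E = q"
    and "A \<inter> B \<noteq> {} \<Longrightarrow> A \<inter> B \<in> Gs \<and> measure (p (A \<inter> B)) E = q"
  shows "measure (p (A \<union> B)) E = q"
proof -
  define P where "P = measure (p (A \<union> B))"
  note H = CPS_memberD[OF cps \<open>A \<union> B \<in> Gs\<close>]
  interpret prob_space "p (A \<union> B)"
    by (fact H(1))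
  have incl_excl: "P (X \<union> Y) = P X + P Y - P (X \<inter> Y)" if "X \<subseteq> Omega" "Y \<subseteq> Omega" for X Y
    unfolding P_def using that H by (intro measure_Un3) (auto simp: fmeasurable_eq_sets)
  have Int_A: "P (E \<inter> A) = P A * q" and Int_B: "P (E \<inter> B) = P B * q"
    using CPS_measure_Int_subset[OF cps _ \<open>A \<union> B \<in> Gs\<close> _ \<open>E \<subseteq> Omega\<close>] assms(3,4,6,7)
    unfolding P_def by auto
  have Int_AB: "P (E \<inter> (A \<inter> B)) = P (A \<inter> B) * q"
  proof (cases "A \<inter> B = {}")
    case False
    then show ?thesis
      using CPS_measure_Int_subset[OF cps _ \<open>A \<union> B \<in> Gs\<close> _ \<open>E \<subseteq> Omega\<close>, of "A \<inter> B"] assms(8)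
      unfolding P_def by auto
  qed (simp add: P_def)
  have "P E = P (E \<inter> A \<union> E \<inter> B)"
    using CPS_measure_Int_self[OF cps \<open>A \<union> B \<in> Gs\<close> \<open>E \<subseteq> Omega\<close>]
    unfolding P_def by (simp add: Int_Un_distrib)
  also have "\<dots> = P (E \<inter> A) + P (E \<inter> B) - P (E \<inter> (A \<inter> B))"
  proof -
    have "E \<inter> A \<inter> (E \<inter> B) = E \<inter> (A \<inter> B)" "E \<inter> A \<subseteq> Omega" "E \<inter> B \<subseteq> Omega"
      using \<open>E \<subseteq> Omega\<close> by blast+
    then show ?thesis
      using incl_excl[of "E \<inter> A" "E \<inter> B"] by simp
  qed
  also have "\<dots> = q * (P A + P B - P (A \<inter> B))"
    by (simp add: Int_A Int_B Int_AB algebra_simps)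
  also have "P A + P B - P (A \<inter> B) = 1"
    using incl_excl[of A B] H CPS_memberD(5)[OF cps] assms(3,4) unfolding P_def by simp
  finally show ?thesis
    unfolding P_def by simp
qed

lemma Inter_mem_if_Int_closed:
  assumes "finite F" "F \<noteq> {}" "F \<subseteq> Gs" "w \<in> \<Inter>F"
    and "\<And>A B. A \<in> Gs \<Longrightarrow> B \<in> Gs \<Longrightarrow> A \<inter> B \<noteq> {} \<Longrightarrow> A \<inter> B \<in> Gs"
  shows "\<Inter>F \<in> Gs"
  using assms(1-4)
proof (induction F rule: finite_ne_induct)
  case (insert X F)
  then show ?case
    using assms(5)[of X "\<Inter>F"] by auto
qed simp

lemma mem_atom: "w \<in> atom Gs w"
  by (simp add: atom_def)

lemma atom_subset: "H \<in> Gs \<Longrightarrow> w \<in> H \<Longrightarrow> atom Gs w \<subseteq> H"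
  by (auto simp: atom_def)

lemma atom_in_Gs:
  assumes "finite Gs" "w \<in> \<Union>Gs"
    and "\<And>A B. A \<in> Gs \<Longrightarrow> B \<in> Gs \<Longrightarrow> A \<inter> B \<noteq> {} \<Longrightarrow> A \<inter> B \<in> Gs"
  shows "atom Gs w \<in> Gs"
  unfolding atom_def using assms by (intro Inter_mem_if_Int_closed[where w = w]) auto

lemma Un_closed_split_non_atom:
  assumes "finite Gs" and Un_closed: "\<And>A B. A \<in> Gs \<Longrightarrow> B \<in> Gs \<Longrightarrow> A \<union> B \<in> Gs"
    and atoms: "\<And>w. w \<in> H \<Longrightarrow> atom Gs w \<in> Gs" and "H \<in> Gs" "H \<noteq> {}"
    and not_atom: "\<And>w. w \<in> H \<Longrightarrow> atom Gs w \<noteq> H"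
  obtains A B where "A \<in> Gs" "A \<subset> H" "B \<in> Gs" "B \<subset> H" "A \<union> B = H"
proof -
  define S where "S = {X \<in> Gs. X \<subset> H}"
  have proper: "atom Gs w \<in> S" if "w \<in> H" for w
    using atom_subset[OF \<open>H \<in> Gs\<close> that] not_atom[OF that] atoms[OF that]
    by (simp add: S_def psubset_eq)
  have "S \<noteq> {}"
    using \<open>H \<noteq> {}\<close> proper by blast
  moreover have "finite S"
    using \<open>finite Gs\<close> by (simp add: S_def)
  ultimately obtain A where "A \<in> S" and A_max: "\<forall>X\<in>S. A \<subseteq> X \<longrightarrow> A = X"
    using finite_has_maximal by blast
  then have A: "A \<in> Gs" "A \<subset> H"
    by (simp_all add: S_def)
  then obtain y where y: "y \<in> H" "y \<notin> A"
    by auto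
  have "A \<union> atom Gs y = H"
  proof (rule ccontr)
    assume "A \<union> atom Gs y \<noteq> H"
    then have "A \<union> atom Gs y \<in> S"
      using Un_closed[OF A(1) atoms[OF y(1)]] A(2) proper[OF y(1)] by (auto simp: S_def)
    then have "A = A \<union> atom Gs y"
      using A_max by blast
    then show False
      using mem_atom[of y Gs] y(2) by blast
  qed
  then show thesis
    using that[OF A atoms[OF y(1)]] proper[OF y(1)] by (simp add: S_def)
qed

lemma CPS_measure_eq_if_eq_on_atoms:
  assumes cps: "CPS Omega Gs p" and "finite Omega"
    and Un_closed: "\<And>A B. A \<in> Gs \<Longrightarrow> B \<in> Gs \<Longrightarrow> A \<union> B \<in> Gs"
    and Int_closed: "\<And>A B. A \<in> Gs \<Longrightarrow> B \<in> Gs \<Longrightarrow> A \<inter> B \<noteq> {} \<Longrightarrow> A \<inter> B \<in> Gs"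
    and "\<Union>Gs = Omega" "E \<subseteq> Omega" "H \<in> Gs"
    and "\<And>w. w \<in> H \<Longrightarrow> measure (p (atom Gs w)) E = q"
  shows "measure (p H) E = q"
proof -
  have "Gs \<subseteq> Pow Omega"
    using CPS_memberD(5)[OF cps] by blast
  then have "finite Gs"
    using \<open>finite Omega\<close> by (simp add: finite_subset)
  have atoms: "atom Gs w \<in> Gs" if "w \<in> Omega" for w
    using atom_in_Gs[OF \<open>finite Gs\<close> _ Int_closed] that \<open>\<Union>Gs = Omega\<close> by blast
  have "finite H"
    using CPS_memberD(5)[OF cps \<open>H \<in> Gs\<close>] \<open>finite Omega\<close> by (rule finite_subset)
  then show ?thesis
    using assms(7,8)
  proof (induction H rule: finite_psubset_induct)
    case (psubset H)
    note H = CPS_memberD[OF cps \<open>H \<in> Gs\<close>]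
    have IH: "measure (p X) E = q" if "X \<in> Gs" "X \<subset> H" for X
      using psubset.IH[OF that(2,1)] psubset.prems(2) that(2) by blast
    show ?case
    proof (cases "\<exists>w\<in>H. atom Gs w = H")
      case True
      then show ?thesis
        using psubset.prems(2) by auto
    next
      case False
      have atoms_H: "atom Gs w \<in> Gs" if "w \<in> H" for w
        using atoms H(5) that by blast
      have not_atom: "atom Gs w \<noteq> H" if "w \<in> H" for w
        using False that by blast
      obtain A B where A: "A \<in> Gs" "A \<subset> H" and B: "B \<in> Gs" "B \<subset> H" and "A \<union> B = H"
        by (rule Un_closed_split_non_atom[OF \<open>finite Gs\<close> Un_closed atoms_H \<open>H \<in> Gs\<close> H(6) not_atom])
      have "A \<inter> B \<in> Gs \<and> measure (p (A \<inter> B)) E = q" if "A \<inter> B \<noteq> {}"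
        using Int_closed[OF A(1) B(1) that] IH[of "A \<inter> B"] A(2) by blast
      then have "measure (p (A \<union> B)) E = q"
        using CPS_measure_Un_eq[OF cps \<open>E \<subseteq> Omega\<close> A(1) B(1) _ IH[OF A] IH[OF B]]
          \<open>A \<union> B = H\<close> \<open>H \<in> Gs\<close> by simp
      then show ?thesis
        using \<open>A \<union> B = H\<close> by simp
    qed
  qed
qed

theorem lemma6:
  fixes Omega :: "'a set" and Gs :: "'a set set" and p :: "'a set \<Rightarrow> 'a measure"
    and G E :: "'a set" and q :: real
  assumes "finite Omega"
    and "CPS Omega Gs p"
    and "\<And>A B. A \<in> Gs \<Longrightarrow> B \<in> Gs \<Longrightarrow> A \<union> B \<in> Gs"
    and "\<And>A B. A \<in> Gs \<Longrightarrow> B \<in> Gs \<Longrightarrow> A \<inter> B \<noteq> {} \<Longrightarrow> A \<inter> B \<in> Gs"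
    and "\<Union>Gs = Omega"
    and "G \<in> Gs"
    and "E \<subseteq> Omega"
    and "0 \<le> q" "q \<le> 1"
    and "\<And>\<mu>. \<mu> \<in> {atom Gs \<omega> | \<omega>. \<omega> \<in> Omega \<and> atom Gs \<omega> \<subseteq> G} \<Longrightarrow>
               measure (p \<mu>) E = q"
  shows "measure (p G) E = q"
proof (rule CPS_measure_eq_if_eq_on_atoms[OF assms(2,1,3,4,5,7,6)])
  fix w
  assume "w \<in> G"
  then have "atom Gs w \<in> {atom Gs \<omega> | \<omega>. \<omega> \<in> Omega \<and> atom Gs \<omega> \<subseteq> G}"
    using atom_subset[OF \<open>G \<in> Gs\<close>] CPS_memberD(5)[OF \<open>CPS Omega Gs p\<close> \<open>G \<in> Gs\<close>] by blast
  then show "measure (p (atom Gs w)) E = q"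
    by (rule assms(10))
qed

end
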